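(* Let $p\in\mathbb N$ with $p\ge 6$, and write $p=5k+r$ with $k\in\mathbb N$ and $0\le r\le 4$. If $G$ is a graph on $p$ vertices containing no copy of $T_6^2$, then $e(G)\le 2p-\frac{r(5-r)}{2}$.
   Context: All graphs are finite and simple; a graph "contains" $H$ if it has a subgraph isomorphic to $H$; $e(G)$ is the number of edges of $G$. $T_6^2$ is the tree on vertex set $\{v_0,\ldots,v_5\}$ with edges $v_0v_1,v_0v_2,v_0v_3,v_3v_4,v_3v_5$. *)

theory Defs
  imports Complex_Main
begin

definition simple_graph :: "'a set \<Rightarrow> 'a set set \<Rightarrow> bool" where
  "simple_graph V E \<longleftrightarrow> finite V \<and> (\<forall>e\<in>E. e \<subseteq> V \<and> card e = 2)"

definition T62_edges :: "nat set set" where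
  "T62_edges = {{0,1},{0,2},{0,3},{3,4},{3,5}}"

definition contains_T62 :: "'a set \<Rightarrow> 'a set set \<Rightarrow> bool" where
  "contains_T62 V E \<longleftrightarrow>
     (\<exists>f. inj_on f {0..5::nat} \<and> f ` {0..5} \<subseteq> V \<and> (\<forall>e\<in>T62_edges. f ` e \<in> E))"

end

theory Submission
  imports Defs
begin

(* Put  g(n) = (n mod 5) * (5 - n mod 5)  (rem_term below).  We prove the size-free
   bound  2 e(G) + g(|V|) <= 4 |V|  for every T_6^2-free graph G by strong induction
   on |V|, from which the theorem is the case |V| = p, p mod 5 = r.
   - If G is disconnected, the bound holds on both sides of a separation and adds
     up, because g is subadditive.
   - If G is connected with at most 5 vertices, e(G) <= C(|V|,2) suffices.
   - If G is connected with at least 6 vertices, the degree deficiency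
     sum_v (4 - d(v)) = 4|V| - 2 e(G) is at least 6 >= g(|V|).
   The last step uses two local consequences of T_6^2-freeness: a neighbour of a
   vertex of degree >= 5 has degree <= 2, and if d(u) >= 4, v ~ u and d(v) >= 3,
   then N(v) lies in N[u].  With a vertex of degree >= 5 the deficiency is bounded
   by discharging from the high-degree vertices to their neighbours; with maximum
   degree 4 by the structure around an edge leaving a closed neighbourhood N[u];
   with maximum degree <= 3 it is at least |V| >= 6. *)

definition nbhd :: "'a set set \<Rightarrow> 'a \<Rightarrow> 'a set" where
  "nbhd E v = {w. {v, w} \<in> E}"

abbreviation deg :: "'a set set \<Rightarrow> 'a \<Rightarrow> nat" where
  "deg E v \<equiv> card (nbhd E v)"

lemma nbhd_sym: "w \<in> nbhd E v \<longleftrightarrow> v \<in> nbhd E w"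
  unfolding nbhd_def by (simp add: insert_commute)

lemma nbhd_subset: "simple_graph V E \<Longrightarrow> nbhd E v \<subseteq> V"
  unfolding simple_graph_def nbhd_def by auto

lemma finite_nbhd: "simple_graph V E \<Longrightarrow> finite (nbhd E v)"
  using nbhd_subset simple_graph_def finite_subset by metis

lemma not_in_own_nbhd: "simple_graph V E \<Longrightarrow> v \<notin> nbhd E v"
  unfolding simple_graph_def nbhd_def by force

lemma obtain_two:
  assumes "2 \<le> card A"
  obtains a b where "a \<in> A" "b \<in> A" "a \<noteq> b"
proof -
  obtain B where "B \<subseteq> A" "card B = 2" using assms obtain_subset_with_card_n by metis
  then show ?thesis using that by (auto simp: card_2_iff)
qed

lemma obtain_two_avoiding:
  assumes "finite S" and "card S + 2 \<le> card A"
  obtains a b where "a \<in> A - S" "b \<in> A - S" "a \<noteq> b"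
proof -
  have "2 \<le> card (A - S)" using diff_card_le_card_Diff[OF assms(1), of A] assms(2) by linarith
  then show ?thesis using that by (rule obtain_two)
qed

lemma obtain_one_avoiding:
  assumes "finite S" and "card S < card A"
  obtains a where "a \<in> A - S"
proof -
  have "0 < card (A - S)" using diff_card_le_card_Diff[OF assms(1), of A] assms(2) by linarith
  then show ?thesis using that by (metis card_gt_0_iff ex_in_conv)
qed

section \<open>Local structure of T_6^2-free graphs\<close>

lemma T62_from_double_star:
  assumes sg: "simple_graph V E"
    and h: "v \<in> nbhd E u" "a1 \<in> nbhd E u" "a2 \<in> nbhd E u" "b1 \<in> nbhd E v" "b2 \<in> nbhd E v"
    and d: "a1 \<noteq> a2" "b1 \<noteq> b2" "a1 \<noteq> v" "a2 \<noteq> v" "b1 \<noteq> u" "b2 \<noteq> u"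
      "a1 \<noteq> b1" "a1 \<noteq> b2" "a2 \<noteq> b1" "a2 \<noteq> b2"
  shows "contains_T62 V E"
proof -
  have loopfree: "u \<noteq> v" "a1 \<noteq> u" "a2 \<noteq> u" "b1 \<noteq> v" "b2 \<noteq> v"
    using not_in_own_nbhd[OF sg] h by metis+
  have "u \<in> nbhd E v" using h(1) nbhd_sym by metis
  then have in_V: "u \<in> V" "v \<in> V" "a1 \<in> V" "a2 \<in> V" "b1 \<in> V" "b2 \<in> V"
    using h nbhd_subset[OF sg] by blast+
  have I: "{0..5::nat} = {0, 1, 2, 3, 4, 5}" by auto
  define f where "f = (\<lambda>i::nat. if i = 0 then u else if i = 1 then a1 else if i = 2 then a2
    else if i = 3 then v else if i = 4 then b1 else b2)"
  have "inj_on f {0..5}" unfolding I f_def using loopfree d by (auto simp: inj_on_def)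
  moreover have "f ` {0..5} \<subseteq> V" unfolding I f_def using in_V by auto
  moreover have "\<forall>e\<in>T62_edges. f ` e \<in> E"
    unfolding T62_edges_def f_def using h by (auto simp: nbhd_def insert_commute)
  ultimately show ?thesis unfolding contains_T62_def by blast
qed

lemma nbr_of_high_degree:
  assumes sg: "simple_graph V E" and nc: "\<not> contains_T62 V E"
    and du: "5 \<le> deg E u" and v: "v \<in> nbhd E u"
  shows "deg E v \<le> 2"
proof (rule ccontr)
  assume "\<not> ?thesis"
  then have "card {u} + 2 \<le> deg E v" by simp
  then obtain b1 b2 where b: "b1 \<in> nbhd E v - {u}" "b2 \<in> nbhd E v - {u}" "b1 \<noteq> b2"
    by (rule obtain_two_avoiding[rotated]) auto
  have "card {v, b1, b2} \<le> 3" by (simp add: card_insert_if)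
  with du have "card {v, b1, b2} + 2 \<le> deg E u" by linarith
  then obtain a1 a2 where a: "a1 \<in> nbhd E u - {v, b1, b2}" "a2 \<in> nbhd E u - {v, b1, b2}" "a1 \<noteq> a2"
    by (rule obtain_two_avoiding[rotated]) auto
  have "contains_T62 V E"
    by (rule T62_from_double_star[OF sg v, of a1 a2 b1 b2]) (use a b in auto)
  with nc show False by simp
qed

lemma nbhd_within_closed_nbhd:
  assumes sg: "simple_graph V E" and nc: "\<not> contains_T62 V E"
    and du: "4 \<le> deg E u" and v: "v \<in> nbhd E u" and dv: "3 \<le> deg E v"
  shows "nbhd E v \<subseteq> insert u (nbhd E u)"
proof
  fix y assume y: "y \<in> nbhd E v"
  show "y \<in> insert u (nbhd E u)"
  proof (rule ccontr)
    assume y_out: "y \<notin> insert u (nbhd E u)"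
    have "card {u, y} \<le> 2" by (simp add: card_insert_if)
    with dv have "card {u, y} < deg E v" by linarith
    then obtain b2 where b: "b2 \<in> nbhd E v - {u, y}"
      by (rule obtain_one_avoiding[rotated]) auto
    have "card {v, b2} \<le> 2" by (simp add: card_insert_if)
    with du have "card {v, b2} + 2 \<le> deg E u" by linarith
    then obtain a1 a2 where a: "a1 \<in> nbhd E u - {v, b2}" "a2 \<in> nbhd E u - {v, b2}" "a1 \<noteq> a2"
      by (rule obtain_two_avoiding[rotated]) auto
    have "contains_T62 V E"
      by (rule T62_from_double_star[OF sg v, of a1 a2 y b2]) (use a b y y_out in auto)
    with nc show False by simp
  qed
qed

lemma card_nbhd_eq_incident_edges:
  assumes sg: "simple_graph V E"
  shows "deg E v = card {e\<in>E. v \<in> e}"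
proof (rule bij_betw_same_card)
  show "bij_betw (\<lambda>w. {v, w}) (nbhd E v) {e\<in>E. v \<in> e}"
  proof (rule bij_betwI')
    fix x y show "({v, x} = {v, y}) = (x = y)" by (metis doubleton_eq_iff)
  next
    fix x assume "x \<in> nbhd E v" then show "{v, x} \<in> {e\<in>E. v \<in> e}" by (simp add: nbhd_def)
  next
    fix e assume e: "e \<in> {e\<in>E. v \<in> e}"
    then have "card e = 2" using sg unfolding simple_graph_def by blast
    then obtain a b where "e = {a, b}" by (meson card_2_iff)
    with e show "\<exists>x\<in>nbhd E v. e = {v, x}" by (auto simp: nbhd_def insert_commute)
  qed
qed

lemma handshake:
  assumes sg: "simple_graph V E"
  shows "(\<Sum>v\<in>V. deg E v) = 2 * card E"
proof -
  have fV: "finite V" and EV: "\<And>e. e \<in> E \<Longrightarrow> e \<subseteq> V \<and> card e = 2"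
    using sg unfolding simple_graph_def by auto
  have fE: "finite E" using fV EV by (meson finite_Pow_iff finite_subset subsetI PowI)
  have "(\<Sum>v\<in>V. deg E v) = (\<Sum>v\<in>V. \<Sum>e\<in>E. if v \<in> e then 1 else 0)"
    using fE by (simp add: card_nbhd_eq_incident_edges[OF sg] sum.If_cases Collect_conj_eq
        Int_commute)
  also have "\<dots> = (\<Sum>e\<in>E. \<Sum>v\<in>V. if v \<in> e then 1 else 0)" by (rule sum.swap)
  also have "\<dots> = (\<Sum>e\<in>E. card e)"
  proof (rule sum.cong[OF refl])
    fix e assume "e \<in> E"
    then have "V \<inter> {v. v \<in> e} = e" using EV by auto
    then show "(\<Sum>v\<in>V. if v \<in> e then 1 else 0) = card e" using fV by (simp add: sum.If_cases)
  qed
  also have "\<dots> = 2 * card E" using EV by simp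
  finally show ?thesis .
qed

lemma sum_card_nbhd_inter:
  assumes sg: "simple_graph V E" and B: "B \<subseteq> V"
  shows "(\<Sum>v\<in>V. card (nbhd E v \<inter> B)) = (\<Sum>b\<in>B. deg E b)"
proof -
  have fV: "finite V" using sg simple_graph_def by auto
  have fB: "finite B" using fV B finite_subset by auto
  have "(\<Sum>v\<in>V. card (nbhd E v \<inter> B)) = (\<Sum>v\<in>V. \<Sum>b\<in>B. if b \<in> nbhd E v then 1 else 0)"
  proof (rule sum.cong[OF refl])
    fix v
    have "nbhd E v \<inter> B = B \<inter> {b. b \<in> nbhd E v}" by auto
    then show "card (nbhd E v \<inter> B) = (\<Sum>b\<in>B. if b \<in> nbhd E v then 1 else 0)"
      using fB by (simp add: sum.If_cases)
  qed
  also have "\<dots> = (\<Sum>b\<in>B. \<Sum>v\<in>V. if b \<in> nbhd E v then 1 else 0)" by (rule sum.swap)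
  also have "\<dots> = (\<Sum>b\<in>B. deg E b)"
  proof (rule sum.cong[OF refl])
    fix b
    have "V \<inter> {v. b \<in> nbhd E v} = nbhd E b"
      using nbhd_subset[OF sg, of b] by (auto simp: nbhd_sym[of b])
    then show "(\<Sum>v\<in>V. if b \<in> nbhd E v then 1 else 0) = deg E b" using fV
      by (simp add: sum.If_cases)
  qed
  finally show ?thesis .
qed

section \<open>The degree deficiency\<close>

definition deficiency :: "'a set set \<Rightarrow> 'a set \<Rightarrow> int" where
  "deficiency E V = (\<Sum>v\<in>V. 4 - int (deg E v))"

lemma deficiency_eq:
  assumes sg: "simple_graph V E"
  shows "deficiency E V = 4 * int (card V) - 2 * int (card E)"
proof -
  have "(\<Sum>v\<in>V. int (deg E v)) = 2 * int (card E)"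
    using handshake[OF sg] by (metis of_nat_mult of_nat_numeral of_nat_sum)
  then show ?thesis unfolding deficiency_def by (simp add: sum_subtractf)
qed

text \<open>Discharging: every vertex of B sends one unit along each of its edges; for
  B \<subseteq> V this redistribution leaves the total deficiency unchanged.\<close>

lemma deficiency_discharge:
  assumes sg: "simple_graph V E" and B: "B \<subseteq> V"
  shows "deficiency E V = (\<Sum>v\<in>V. 4 - int (deg E v) - int (card (nbhd E v \<inter> B))
                                   + (if v \<in> B then int (deg E v) else 0))"
proof -
  have fV: "finite V" using sg simple_graph_def by auto
  have "(\<Sum>v\<in>V. int (card (nbhd E v \<inter> B))) = (\<Sum>b\<in>B. int (deg E b))"
    using sum_card_nbhd_inter[OF sg B] by (metis of_nat_sum)
  also have "\<dots> = (\<Sum>v\<in>V. if v \<in> B then int (deg E v) else 0)"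
    using fV B by (simp add: sum.If_cases Int_absorb1)
  finally show ?thesis unfolding deficiency_def by (simp add: sum.distrib sum_subtractf)
qed

text \<open>Case of a vertex of degree at least 5.  The high-degree vertices form an
  independent set B all of whose neighbours have degree at most 2; after
  discharging every charge is non-negative and the vertices of B carry charge 4.\<close>

lemma deficiency_high_degree:
  assumes sg: "simple_graph V E" and nc: "\<not> contains_T62 V E"
    and z: "z \<in> V" "5 \<le> deg E z"
  shows "6 \<le> deficiency E V"
proof -
  have fV: "finite V" using sg simple_graph_def by auto
  define B where "B = {v\<in>V. 5 \<le> deg E v}"
  have BV: "B \<subseteq> V" and zB: "z \<in> B" using z unfolding B_def by auto
  define \<phi> where "\<phi> v = 4 - int (deg E v) - int (card (nbhd E v \<inter> B))
                         + (if v \<in> B then int (deg E v) else 0)" for v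
  have low_if_B_nbr: "deg E v \<le> 2" if "b \<in> B" "b \<in> nbhd E v" for v b
    using nbr_of_high_degree[OF sg nc _ that(2)[unfolded nbhd_sym[of b]]] that(1) B_def by auto
  have \<phi>_B: "\<phi> v = 4" if "v \<in> B" for v
  proof -
    have "nbhd E v \<inter> B = {}" using low_if_B_nbr that B_def by fastforce
    then show ?thesis using that unfolding \<phi>_def by simp
  qed
  have inter_le: "card (nbhd E v \<inter> B) \<le> deg E v" for v
    using finite_nbhd[OF sg] by (simp add: card_mono)
  have \<phi>_nonneg: "0 \<le> \<phi> v" if "v \<in> V" for v
  proof (cases "v \<in> B")
    case True then show ?thesis using \<phi>_B by simp
  next
    case False
    then have "deg E v \<le> 2 \<or> nbhd E v \<inter> B = {}" using low_if_B_nbr by blast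
    moreover have "deg E v \<le> 4" using False that B_def by auto
    ultimately show ?thesis using inter_le[of v] False unfolding \<phi>_def by force
  qed
  have "6 \<le> sum \<phi> V"
  proof (cases "card B \<le> 1")
    case False
    then have "2 \<le> card B" by simp
    then obtain z1 z2 where "z1 \<in> B" "z2 \<in> B" "z1 \<noteq> z2" by (rule obtain_two)
    then have "sum \<phi> {z1, z2} = 8" and "sum \<phi> {z1, z2} \<le> sum \<phi> V"
      using BV \<phi>_nonneg \<phi>_B by (simp, intro sum_mono2[OF fV]) auto
    then show ?thesis by simp
  next
    case True
    have \<phi>_nbr: "1 \<le> \<phi> n" if "n \<in> nbhd E z" for n
    proof -
      have "deg E n \<le> 2" using low_if_B_nbr[OF zB, of n] that nbhd_sym by metis
      moreover have "card (nbhd E n \<inter> B) \<le> 1"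
        using True card_mono[of B "nbhd E n \<inter> B"] fV BV finite_subset by fastforce
      ultimately show ?thesis using B_def unfolding \<phi>_def by auto
    qed
    have "2 \<le> deg E z" using z by simp
    then obtain n1 n2 where n: "n1 \<in> nbhd E z" "n2 \<in> nbhd E z" "n1 \<noteq> n2" by (rule obtain_two)
    have "n1 \<noteq> z" "n2 \<noteq> z" "n1 \<in> V" "n2 \<in> V"
      using n not_in_own_nbhd[OF sg] nbhd_subset[OF sg] by blast+
    then have "sum \<phi> {z, n1, n2} = \<phi> z + \<phi> n1 + \<phi> n2" and "sum \<phi> {z, n1, n2} \<le> sum \<phi> V"
      using z n \<phi>_nonneg by (simp, intro sum_mono2[OF fV]) auto
    moreover have "1 \<le> \<phi> n1" "1 \<le> \<phi> n2" using \<phi>_nbr n by auto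
    ultimately show ?thesis using \<phi>_B[OF zB] by linarith
  qed
  then show ?thesis using deficiency_discharge[OF sg BV] unfolding \<phi>_def by simp
qed

lemma exit_vertex_nbhd:
  assumes sg: "simple_graph V E" and nc: "\<not> contains_T62 V E"
    and du: "4 \<le> deg E u" and s: "s \<in> nbhd E u"
    and x: "x \<in> nbhd E s" and x_out: "x \<notin> insert u (nbhd E u)"
  shows "nbhd E s \<subseteq> {u, x}"
proof
  fix w assume w: "w \<in> nbhd E s"
  show "w \<in> {u, x}"
  proof (rule ccontr)
    assume w_new: "w \<notin> {u, x}"
    have "{u, x, w} \<subseteq> nbhd E s" using w x s nbhd_sym[of s E u] by blast
    moreover have "card {u, x, w} = 3" using x_out w_new by auto
    ultimately have "3 \<le> deg E s" using finite_nbhd[OF sg] card_mono by metis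
    with x x_out show False using nbhd_within_closed_nbhd[OF sg nc du s] by blast
  qed
qed

lemma exit_other_nbrs:
  assumes sg: "simple_graph V E" and nc: "\<not> contains_T62 V E"
    and du: "4 \<le> deg E u" and s: "s \<in> nbhd E u"
    and x: "x \<in> nbhd E s" and x_out: "x \<notin> insert u (nbhd E u)"
    and y: "y \<in> nbhd E u" "y \<noteq> s"
  shows "deg E y \<le> 3"
proof (rule ccontr)
  assume "\<not> ?thesis"
  then have "4 \<le> deg E y" by simp
  moreover have "u \<in> nbhd E y" using y nbhd_sym by metis
  moreover have "3 \<le> deg E u" using du by simp
  ultimately have "nbhd E u \<subseteq> insert y (nbhd E y)"
    by (rule nbhd_within_closed_nbhd[OF sg nc])
  then have "y \<in> nbhd E s" using s y nbhd_sym[of s E y] by blast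
  then have "y = u \<or> y = x" using exit_vertex_nbhd[OF assms(1-6)] by blast
  then show False using y x_out not_in_own_nbhd[OF sg] by blast
qed

lemma exit_far_low_vertex:
  assumes sg: "simple_graph V E" and nc: "\<not> contains_T62 V E"
    and du: "4 \<le> deg E u" and s: "s \<in> nbhd E u"
    and x: "x \<in> nbhd E s" and x_out: "x \<notin> insert u (nbhd E u)"
    and others: "\<And>y. y \<in> nbhd E u - {s} \<Longrightarrow> 3 \<le> deg E y"
  shows "\<exists>t\<in>V. t \<notin> insert u (nbhd E u) \<and> deg E t \<le> 3"
proof (cases "deg E x \<le> 3")
  case True then show ?thesis using x x_out nbhd_subset[OF sg] by blast
next
  case False
  obtain t where t: "t \<in> nbhd E x - {s}"
    by (rule obtain_one_avoiding[of "{s}" "nbhd E x"]) (use False in auto)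
  have s_nbhd: "nbhd E s \<subseteq> {u, x}" using exit_vertex_nbhd[OF assms(1-6)] .
  have "t \<noteq> u" using t x_out nbhd_sym[of t E x] by blast
  moreover have "t \<notin> nbhd E u"
  proof
    assume "t \<in> nbhd E u"
    then have "nbhd E t \<subseteq> insert u (nbhd E u)"
      using nbhd_within_closed_nbhd[OF sg nc du] others t by blast
    then show False using t x_out nbhd_sym[of t E x] by blast
  qed
  moreover have "deg E t \<le> 3"
  proof (rule ccontr)
    assume "\<not> ?thesis"
    then have "nbhd E x \<subseteq> insert t (nbhd E t)"
      using nbhd_within_closed_nbhd[OF sg nc, of t x] False t nbhd_sym[of t E x] by auto
    then have "t \<in> nbhd E s" using x t nbhd_sym[of s E t] nbhd_sym[of x E s] by blast
    then show False using s_nbhd \<open>t \<noteq> u\<close> t not_in_own_nbhd[OF sg, of x] by blast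
  qed
  ultimately show ?thesis using t nbhd_subset[OF sg] by blast
qed

definition connected_graph :: "'a set \<Rightarrow> 'a set set \<Rightarrow> bool" where
  "connected_graph V E \<longleftrightarrow>
     (\<forall>X. X \<noteq> {} \<and> X \<subset> V \<longrightarrow> (\<exists>e\<in>E. \<not> e \<subseteq> X \<and> \<not> e \<subseteq> V - X))"

lemma edge_leaving:
  assumes sg: "simple_graph V E" and conn: "connected_graph V E"
    and X: "X \<noteq> {}" "X \<subset> V"
  shows "\<exists>s\<in>X. \<exists>x. x \<notin> X \<and> x \<in> nbhd E s"
proof -
  obtain e where e: "e \<in> E" "\<not> e \<subseteq> X" "\<not> e \<subseteq> V - X"
    using conn X unfolding connected_graph_def by blast
  moreover obtain a b where "e = {a, b}"
    using e(1) sg unfolding simple_graph_def by (metis card_2_iff)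
  moreover have "e \<subseteq> V" using e(1) sg unfolding simple_graph_def by blast
  ultimately have ab: "{a, b} \<in> E" "{b, a} \<in> E" and "(a \<in> X \<and> b \<notin> X) \<or> (b \<in> X \<and> a \<notin> X)"
    by (auto simp: insert_commute)
  then show ?thesis unfolding nbhd_def by blast
qed

lemma edge_leaving_closed_nbhd:
  assumes sg: "simple_graph V E" and conn: "connected_graph V E" and six: "6 \<le> card V"
    and u: "u \<in> V" "deg E u = 4"
  obtains s x where "s \<in> nbhd E u" "x \<in> nbhd E s" "x \<notin> insert u (nbhd E u)"
proof -
  define X where "X = insert u (nbhd E u)"
  have "X \<subseteq> V" unfolding X_def using u nbhd_subset[OF sg] by auto
  moreover have "card X = 5"
    unfolding X_def using u not_in_own_nbhd[OF sg, of u] finite_nbhd[OF sg] by simp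
  ultimately obtain s x where sx: "s \<in> X" "x \<notin> X" "x \<in> nbhd E s"
    using edge_leaving[OF sg conn, of X] six unfolding X_def by fastforce
  then have "s \<in> nbhd E u" unfolding X_def by blast
  then show ?thesis using that sx unfolding X_def by blast
qed

text \<open>Case of maximum degree exactly 4: an edge s x leaves N[u] for some u of degree 4;
  then s contributes 2, the three other neighbours of u contribute at least 1 each,
  and either one of them contributes 2 or a vertex outside N[u] contributes 1.\<close>

lemma deficiency_max_degree_4:
  assumes sg: "simple_graph V E" and nc: "\<not> contains_T62 V E"
    and conn: "connected_graph V E" and six: "6 \<le> card V"
    and le4: "\<And>v. v \<in> V \<Longrightarrow> deg E v \<le> 4"
    and u: "u \<in> V" "deg E u = 4"
  shows "6 \<le> deficiency E V"
proof -
  have fV: "finite V" using sg simple_graph_def by auto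
  define f where "f v = 4 - int (deg E v)" for v
  have f_nonneg: "0 \<le> f v" if "v \<in> V" for v using le4[OF that] unfolding f_def by simp
  obtain s x where s: "s \<in> nbhd E u" and x: "x \<in> nbhd E s"
    and x_out: "x \<notin> insert u (nbhd E u)"
    using edge_leaving_closed_nbhd[OF sg conn six u] .
  have du: "4 \<le> deg E u" using u by simp
  note exit = sg nc du s x x_out
  define R where "R = nbhd E u - {s}"
  have fR: "finite R" and cR: "card R = 3" and RV: "R \<subseteq> V" and sR: "s \<notin> R"
    using u s finite_nbhd[OF sg] nbhd_subset[OF sg] unfolding R_def by auto
  have sV: "s \<in> V" using s nbhd_subset[OF sg] by auto
  have "card (nbhd E s) \<le> card {u, x}"
    using exit_vertex_nbhd[OF exit] by (simp add: card_mono)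
  moreover have "card {u, x} = 2" using x_out by auto
  ultimately have fs: "2 \<le> f s" unfolding f_def by simp
  have f_R: "1 \<le> f y" if "y \<in> R" for y
    using exit_other_nbrs[OF exit] that unfolding R_def f_def by force
  have sum_R: "int (card S) \<le> sum f S" if "S \<subseteq> R" for S
    using sum_mono[of S "\<lambda>_. 1" f] f_R that by auto
  show ?thesis
  proof (cases "\<exists>y0\<in>R. deg E y0 \<le> 2")
    case True
    then obtain y0 where y0: "y0 \<in> R" "2 \<le> f y0" unfolding f_def by force
    have "sum f (insert s R) = f s + f y0 + sum f (R - {y0})"
      using fR sR y0 by (simp add: sum.remove)
    moreover have "card (R - {y0}) = 2" using cR y0 fR by simp
    moreover have "sum f (insert s R) \<le> sum f V"
      using RV sV f_nonneg by (intro sum_mono2[OF fV]) auto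
    ultimately show ?thesis using fs y0 sum_R[of "R - {y0}"] unfolding deficiency_def f_def
      by force
  next
    case False
    then have "\<And>y. y \<in> nbhd E u - {s} \<Longrightarrow> 3 \<le> deg E y" unfolding R_def by force
    then obtain t where t: "t \<in> V" "t \<notin> insert u (nbhd E u)" "1 \<le> f t"
      using exit_far_low_vertex[OF exit] unfolding f_def by force
    have "t \<notin> R" "t \<noteq> s" using t s unfolding R_def by auto
    then have "sum f (insert s (insert t R)) = f s + f t + sum f R" using sR fR by simp
    moreover have "sum f (insert s (insert t R)) \<le> sum f V"
      using RV sV t f_nonneg by (intro sum_mono2[OF fV]) auto
    ultimately show ?thesis using fs t sum_R[of R] cR unfolding deficiency_def f_def by force
  qed
qed

lemma deficiency_connected:
  assumes sg: "simple_graph V E" and nc: "\<not> contains_T62 V E"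
    and conn: "connected_graph V E" and six: "6 \<le> card V"
  shows "6 \<le> deficiency E V"
proof -
  consider (high) "\<exists>z\<in>V. 5 \<le> deg E z" | (four) "\<exists>u\<in>V. deg E u = 4" "\<forall>v\<in>V. deg E v \<le> 4"
    | (low) "\<forall>v\<in>V. deg E v \<le> 3" by force
  then show ?thesis
  proof cases
    case high then show ?thesis using deficiency_high_degree[OF sg nc] by blast
  next
    case four then show ?thesis using deficiency_max_degree_4[OF sg nc conn six] by blast
  next
    case low
    then have "(\<Sum>v\<in>V. 1) \<le> deficiency E V"
      unfolding deficiency_def by (intro sum_mono) force
    then show ?thesis using six by simp
  qed
qed

lemma contains_T62_mono:
  assumes "contains_T62 V' E'" and "V' \<subseteq> V" and "E' \<subseteq> E"
  shows "contains_T62 V E"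
proof -
  obtain f where "inj_on f {0..5}" "f ` {0..5} \<subseteq> V'" "\<forall>e\<in>T62_edges. f ` e \<in> E'"
    using assms(1) unfolding contains_T62_def by blast
  then show ?thesis using assms(2,3) unfolding contains_T62_def by blast
qed

lemma induced_part:
  assumes sg: "simple_graph V E" and nc: "\<not> contains_T62 V E" and X: "X \<subseteq> V"
  shows "simple_graph X {e\<in>E. e \<subseteq> X}" and "\<not> contains_T62 X {e\<in>E. e \<subseteq> X}"
proof -
  show "simple_graph X {e\<in>E. e \<subseteq> X}"
    using sg X finite_subset unfolding simple_graph_def by auto
  show "\<not> contains_T62 X {e\<in>E. e \<subseteq> X}"
    using nc X contains_T62_mono[of X "{e\<in>E. e \<subseteq> X}" V E] by blast
qed

lemma card_edges_split:
  assumes sg: "simple_graph V E" and sep: "\<forall>e\<in>E. e \<subseteq> X \<or> e \<subseteq> V - X"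
  shows "card E = card {e\<in>E. e \<subseteq> X} + card {e\<in>E. e \<subseteq> V - X}"
proof -
  have fV: "finite V" and EV: "\<And>e. e \<in> E \<Longrightarrow> e \<subseteq> V \<and> card e = 2"
    using sg unfolding simple_graph_def by auto
  have fE: "finite E" using fV EV by (meson finite_Pow_iff finite_subset subsetI PowI)
  have "e \<noteq> {}" if "e \<in> E" for e using EV[OF that] by auto
  then have "{e\<in>E. e \<subseteq> X} \<inter> {e\<in>E. e \<subseteq> V - X} = {}" by blast
  moreover have "E = {e\<in>E. e \<subseteq> X} \<union> {e\<in>E. e \<subseteq> V - X}" using sep by auto
  ultimately show ?thesis using fE card_Un_disjoint[of "{e\<in>E. e \<subseteq> X}" "{e\<in>E. e \<subseteq> V - X}"]
    by simp
qed

definition rem_term :: "nat \<Rightarrow> nat" where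
  "rem_term n = (n mod 5) * (5 - n mod 5)"

lemma mod_5_cases:
  obtains "(n::nat) mod 5 = 0" | "n mod 5 = 1" | "n mod 5 = 2" | "n mod 5 = 3" | "n mod 5 = 4"
  by linarith

lemma rem_term_subadditive: "rem_term (a + b) \<le> rem_term a + rem_term b"
proof -
  have "rem_term (a + b) = rem_term (a mod 5 + b mod 5)"
    unfolding rem_term_def by (simp add: mod_add_eq)
  moreover have "rem_term (a mod 5 + b mod 5) \<le> rem_term a + rem_term b"
    unfolding rem_term_def by (cases a rule: mod_5_cases; cases b rule: mod_5_cases) simp_all
  ultimately show ?thesis by simp
qed

lemma rem_term_le_6: "rem_term n \<le> 6"
  unfolding rem_term_def by (cases n rule: mod_5_cases) simp_all

lemma small_graph_bound:
  assumes "n \<le> 5" shows "2 * (n choose 2) + rem_term n \<le> 4 * n"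
proof -
  have "n = 0 \<or> n = 1 \<or> n = 2 \<or> n = 3 \<or> n = 4 \<or> n = 5" using assms by auto
  then show ?thesis unfolding rem_term_def by (elim disjE) (simp_all add: choose_two)
qed

lemma T62_free_bound:
  assumes "simple_graph V E" and "\<not> contains_T62 V E"
  shows "2 * card E + rem_term (card V) \<le> 4 * card V"
  using assms
proof (induction "card V" arbitrary: V E rule: less_induct)
  case less
  note sg = less.prems(1) and nc = less.prems(2)
  have fV: "finite V" using sg simple_graph_def by auto
  show ?case
  proof (cases "connected_graph V E")
    case False
    then obtain X where X: "X \<noteq> {}" "X \<subset> V" and sep: "\<forall>e\<in>E. e \<subseteq> X \<or> e \<subseteq> V - X"
      unfolding connected_graph_def by blast
    have XV: "X \<subseteq> V" and fX: "finite X" using X fV finite_subset by auto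
    have smaller: "card X < card V" "card (V - X) < card V"
      using X fV by (auto intro: psubset_card_mono)
    have "2 * card {e\<in>E. e \<subseteq> X} + rem_term (card X) \<le> 4 * card X"
      using less(1)[OF smaller(1) induced_part[OF sg nc XV]] .
    moreover have "2 * card {e\<in>E. e \<subseteq> V - X} + rem_term (card (V - X)) \<le> 4 * card (V - X)"
      using less(1)[OF smaller(2) induced_part[OF sg nc Diff_subset]] .
    moreover have "card V = card X + card (V - X)"
      using card_Diff_subset[OF fX XV] card_mono[OF fV XV] by simp
    ultimately show ?thesis
      using card_edges_split[OF sg sep] rem_term_subadditive[of "card X" "card (V - X)"] by simp
  next
    case True
    show ?thesis
    proof (cases "card V \<le> 5")
      case True
      have "E \<subseteq> {B. B \<subseteq> V \<and> card B = 2}" using sg unfolding simple_graph_def by auto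
      then have "card E \<le> card {B. B \<subseteq> V \<and> card B = 2}" using fV by (intro card_mono) auto
      also have "\<dots> = card V choose 2" using fV by (rule n_subsets)
      finally show ?thesis using small_graph_bound[OF True] by simp
    next
      case False
      then show ?thesis
        using deficiency_connected[OF sg nc True] deficiency_eq[OF sg] rem_term_le_6[of "card V"]
        by simp
    qed
  qed
qed

theorem lemma3p4:
  fixes V :: "'a set" and E :: "'a set set" and p k r :: nat
  assumes "simple_graph V E"
    and "card V = p" and "p \<ge> 6"
    and "p = 5 * k + r" and "r \<le> 4"
    and "\<not> contains_T62 V E"
  shows "real (card E) \<le> 2 * real p - real (r * (5 - r)) / 2"
proof -
  have "rem_term p = r * (5 - r)" using assms(4,5) unfolding rem_term_def by simp
  then have "2 * card E + r * (5 - r) \<le> 4 * p"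
    using T62_free_bound[OF assms(1,6)] assms(2) by simp
  then have "real (2 * card E + r * (5 - r)) \<le> real (4 * p)" by linarith
  then show ?thesis by simp
qed

end
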